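(* Let $\mathcal{A}$ be a C*-algebra, let $E$ be a Hilbert $\mathcal{A}$-module satisfying property $[\mathbb{H}]$, let $C\in\mathcal{K}(E)$ and put $L:=I-C$. Then: (1) For every $y$ in the norm closure of $\mathrm{Ran}(L)$ there exist sequences $(x_n)$ in $E$ and $(u_n)$ in the closed submodule $\mathrm{Ker}(L)$ such that $Lx_n=x_n-Cx_n\to y$ and, for every $n$, $$\|x_n-u_n\|=\delta_n:=\inf\{\|x_n-u\|:\ u\in \mathrm{Ker}(L)\}.$$ (2) For such sequences, the sequence $\zeta_n:=x_n-u_n$ is bounded in $E$.
   Context: A (right) Hilbert $\mathcal{A}$-module $E$ is a right $\mathcal{A}$-module with an $\mathcal{A}$-valued inner product $\langle\cdot,\cdot\rangle$ (linear in the second variable, $\langle x,ya\rangle=\langle x,y\rangle a$, $\langle y,x\rangle=\langle x,y\rangle^*$, $\langle x,x\rangle\ge 0$ with equality iff $x=0$), complete in the norm $\|x\|=\|\langle x,x\rangle\|^{1/2}$. $\mathcal{L}(E)$ denotes the C*-algebra of adjointable operators on $E$; for $x,y\in E$, $\theta_{x,y}(z)=x\langle y,z\rangle$; $\mathcal{K}(E)$ (the compact operators) is the norm closure in $\mathcal{L}(E)$ of the linear span of $\{\theta_{x,y}:x,y\in E\}$. $E$ satisfies property $[\mathbb{H}]$ if for every bounded sequence $(\zeta_n)$ in $E$ there exist a subsequence $(\zeta_{n_k})$ and $\zeta\in E$ such that $\langle v,\zeta_{n_k}\rangle\to\langle v,\zeta\rangle$ for every $v\in E$. *)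

theory Defs
  imports "HOL-Analysis.Analysis"
begin

class cplx_vector = real_vector +
  fixes scaleC :: "complex \<Rightarrow> 'a \<Rightarrow> 'a"
  assumes scaleC_add_right: "scaleC a (x + y) = scaleC a x + scaleC a y"
    and scaleC_add_left: "scaleC (a + b) x = scaleC a x + scaleC b x"
    and scaleC_scaleC: "scaleC a (scaleC b x) = scaleC (a * b) x"
    and scaleC_one: "scaleC 1 x = x"
    and scaleR_scaleC: "scaleR r x = scaleC (complex_of_real r) x"

class cplx_normed_vector = cplx_vector + real_normed_vector +
  assumes norm_scaleC: "norm (scaleC a x) = cmod a * norm x"

class cstar_algebra = cplx_normed_vector + real_normed_algebra + banach +
  fixes cstar :: "'a \<Rightarrow> 'a"
  assumes scaleC_mult_left: "scaleC c (x * y) = scaleC c x * y"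
    and scaleC_mult_right: "scaleC c (x * y) = x * scaleC c y"
    and cstar_cstar: "cstar (cstar x) = x"
    and cstar_add: "cstar (x + y) = cstar x + cstar y"
    and cstar_scaleC: "cstar (scaleC c x) = scaleC (cnj c) (cstar x)"
    and cstar_mult: "cstar (x * y) = cstar y * cstar x"
    and cstar_identity: "norm (cstar x * x) = (norm x)\<^sup>2"

definition cstar_pos :: "'a::cstar_algebra \<Rightarrow> bool" where
  "cstar_pos a \<longleftrightarrow> (\<exists>b. a = cstar b * b)"

text \<open>E is a complex Banach space (type class banach gives completeness);
  act is the right A-action, inn the A-valued inner product; the norm of E is the
  one induced by the inner product.\<close>
definition hilbert_module ::
  "('e::{cplx_normed_vector,banach} \<Rightarrow> 'a::cstar_algebra \<Rightarrow> 'e) \<Rightarrow> ('e \<Rightarrow> 'e \<Rightarrow> 'a) \<Rightarrow> bool" where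
  "hilbert_module act inn \<longleftrightarrow>
     (\<forall>x y a. act (x + y) a = act x a + act y a) \<and>
     (\<forall>x a b. act x (a + b) = act x a + act x b) \<and>
     (\<forall>x a b. act x (a * b) = act (act x a) b) \<and>
     (\<forall>c x a. act (scaleC c x) a = scaleC c (act x a)) \<and>
     (\<forall>c x a. act x (scaleC c a) = scaleC c (act x a)) \<and>
     (\<forall>x y z. inn x (y + z) = inn x y + inn x z) \<and>
     (\<forall>c x y. inn x (scaleC c y) = scaleC c (inn x y)) \<and>
     (\<forall>x y a. inn x (act y a) = inn x y * a) \<and>
     (\<forall>x y. inn y x = cstar (inn x y)) \<and>
     (\<forall>x. cstar_pos (inn x x)) \<and>
     (\<forall>x. inn x x = 0 \<longleftrightarrow> x = 0) \<and>
     (\<forall>x. norm x = sqrt (norm (inn x x)))"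

definition adjointable :: "('e \<Rightarrow> 'e \<Rightarrow> 'a) \<Rightarrow> ('e \<Rightarrow> 'e) \<Rightarrow> bool" where
  "adjointable inn T \<longleftrightarrow> (\<exists>S. \<forall>x y. inn (T x) y = inn x (S y))"

definition theta :: "('e \<Rightarrow> 'a \<Rightarrow> 'e) \<Rightarrow> ('e \<Rightarrow> 'e \<Rightarrow> 'a) \<Rightarrow> 'e \<Rightarrow> 'e \<Rightarrow> 'e \<Rightarrow> 'e" where
  "theta act inn x y = (\<lambda>z. act x (inn y z))"

definition finite_rank_ops ::
  "('e::cplx_vector \<Rightarrow> 'a \<Rightarrow> 'e) \<Rightarrow> ('e \<Rightarrow> 'e \<Rightarrow> 'a) \<Rightarrow> ('e \<Rightarrow> 'e) set" where
  "finite_rank_ops act inn =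
     {F. \<exists>n c xs ys. F = (\<lambda>z. \<Sum>i<(n::nat). scaleC (c i) (theta act inn (xs i) (ys i) z))}"

definition compact_op ::
  "('e::cplx_normed_vector \<Rightarrow> 'a \<Rightarrow> 'e) \<Rightarrow> ('e \<Rightarrow> 'e \<Rightarrow> 'a::real_normed_vector) \<Rightarrow> ('e \<Rightarrow> 'e) \<Rightarrow> bool" where
  "compact_op act inn T \<longleftrightarrow> adjointable inn T \<and>
     (\<forall>e>0. \<exists>F\<in>finite_rank_ops act inn. onorm (\<lambda>z. T z - F z) < e)"

definition property_H :: "('e::real_normed_vector \<Rightarrow> 'e \<Rightarrow> 'a::real_normed_vector) \<Rightarrow> bool" where
  "property_H inn \<longleftrightarrow>
     (\<forall>\<zeta>::nat \<Rightarrow> 'e. bounded (range \<zeta>) \<longrightarrow>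
        (\<exists>r \<zeta>0. strict_mono r \<and> (\<forall>v. (\<lambda>k. inn v (\<zeta> (r k))) \<longlonglongrightarrow> inn v \<zeta>0)))"

end

theory Submission
  imports Defs
begin

text \<open>
  Adjointable operators on a Hilbert C*-module are bounded (uniform boundedness applied to the
  functionals \<open>y \<mapsto> \<langle>T x, y\<rangle>\<close>, \<open>\<parallel>x\<parallel> \<le> 1\<close>), and a compact operator, being a norm limit of finite-rank
  operators, maps every bounded sequence that converges weakly in the sense of [H] to a
  norm-convergent one. Hence, if \<open>(w\<^sub>n)\<close> is bounded and \<open>L w\<^sub>n \<rightarrow> l\<close>, then \<open>w\<^sub>n = L w\<^sub>n + C w\<^sub>n\<close>
  has a subsequence converging to some \<open>u\<close> with \<open>L u = l\<close>.

  Applied to a minimising sequence in \<open>Ker L\<close>, this shows that the distance to \<open>Ker L\<close> is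
  attained, which gives (1). For (2), suppose \<open>\<zeta>\<^sub>n = x\<^sub>n - u\<^sub>n\<close> were unbounded. Since \<open>L \<zeta>\<^sub>n = L x\<^sub>n\<close>
  is bounded, the normalised vectors \<open>\<zeta>\<^sub>n / \<parallel>\<zeta>\<^sub>n\<parallel>\<close> along a subsequence with \<open>\<parallel>\<zeta>\<^sub>n\<parallel> \<rightarrow> \<infinity>\<close> satisfy
  \<open>L(\<zeta>\<^sub>n / \<parallel>\<zeta>\<^sub>n\<parallel>) \<rightarrow> 0\<close>, so a further subsequence converges to some \<open>v \<in> Ker L\<close>. But \<open>0\<close> is a best
  approximation of \<open>\<zeta>\<^sub>n\<close> in the subspace \<open>Ker L\<close>, so every \<open>\<zeta>\<^sub>n / \<parallel>\<zeta>\<^sub>n\<parallel>\<close> has distance at least 1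
  from \<open>Ker L\<close>, a contradiction.
\<close>

context cplx_vector
begin

lemma scaleC_zero_left [simp]: "scaleC 0 x = 0"
  using scaleC_add_left [of 0 0 x] by simp

lemma scaleC_zero_right [simp]: "scaleC a 0 = 0"
  using scaleC_add_right [of a 0 0] by simp

lemma scaleC_minus_left: "scaleC (- a) x = - scaleC a x"
  using scaleC_add_left [of a "- a" x] by (intro minus_unique [symmetric]) simp

lemma scaleC_minus_right: "scaleC a (- x) = - scaleC a x"
  using scaleC_add_right [of a x "- x"] by (intro minus_unique [symmetric]) simp

lemma scaleC_diff_right: "scaleC a (x - y) = scaleC a x - scaleC a y"
  using scaleC_add_right [of a x "- y"] by (simp add: scaleC_minus_right)

end

lemma bounded_linear_scaleC: "bounded_linear (scaleC c :: 'a::cplx_normed_vector \<Rightarrow> 'a)"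
proof (rule bounded_linear_intro [where K = "cmod c"])
  show "scaleC c (scaleR r x) = scaleR r (scaleC c x)" for r and x :: 'a
    by (simp add: scaleR_scaleC scaleC_scaleC mult.commute)
qed (simp_all add: scaleC_add_right norm_scaleC mult.commute)

context cstar_algebra
begin

lemma cstar_zero [simp]: "cstar 0 = 0"
  using cstar_add [of 0 0] by simp

lemma cstar_minus: "cstar (- x) = - cstar x"
  using cstar_add [of x "- x"] by (intro minus_unique [symmetric]) simp

lemma cstar_diff: "cstar (x - y) = cstar x - cstar y"
  using cstar_add [of x "- y"] by (simp add: cstar_minus)

end

lemma uniform_boundedness:
  fixes f :: "'i \<Rightarrow> 'b::banach \<Rightarrow> 'c::real_normed_vector"
  assumes linear: "\<And>i. i \<in> I \<Longrightarrow> bounded_linear (f i)"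
    and pointwise_bounded: "\<And>y. \<exists>B. \<forall>i\<in>I. norm (f i y) \<le> B"
  obtains M where "M \<ge> 0" and "\<And>i y. i \<in> I \<Longrightarrow> norm (f i y) \<le> M * norm y"
proof -
  define A where "A m = {y. \<forall>i\<in>I. norm (f i y) \<le> real m}" for m :: nat
  have "closed (A m)" for m
  proof -
    have "closed {y. norm (f i y) \<le> real m}" if "i \<in> I" for i
      using linear [OF that]
      by (intro closed_Collect_le continuous_intros) (simp add: linear_continuous_on)
    moreover have "A m = (\<Inter>i\<in>I. {y. norm (f i y) \<le> real m})"
      by (auto simp: A_def)
    ultimately show ?thesis by auto
  qed
  moreover have "(\<Union>m. A m) = UNIV"
  proof -
    have "y \<in> (\<Union>m. A m)" for y
    proof -
      obtain B where "\<forall>i\<in>I. norm (f i y) \<le> B" using pointwise_bounded by blast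
      moreover obtain m :: nat where "B \<le> real m" using real_arch_simple by blast
      ultimately have "y \<in> A m" unfolding A_def by (auto intro: order_trans)
      then show ?thesis by blast
    qed
    then show ?thesis by blast
  qed
  ultimately have "\<exists>m. interior (A m) \<noteq> {}"
    using Baire_category_alt [of euclidean "range A"]
    by (auto simp: completely_metrizable_space_euclidean)
  then obtain m y0 r where "r > 0" and ball: "ball y0 r \<subseteq> A m"
    by (meson all_not_in_conv open_contains_ball open_interior interior_subset subset_trans)
  have "norm (f i y) \<le> (4 * real m / r) * norm y" if "i \<in> I" for i y
  proof (cases "y = 0")
    case True
    then show ?thesis using linear [OF that] by (simp add: linear_simps)
  next
    case False
    define t where "t = r / (2 * norm y)"
    have "t > 0" using \<open>r > 0\<close> False by (simp add: t_def)
    have "y0 \<in> A m" and "y0 + scaleR t y \<in> A m"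
      using ball \<open>r > 0\<close> \<open>t > 0\<close> False by (auto simp: t_def dist_norm subset_iff)
    then have "norm (f i (y0 + scaleR t y) - f i y0) \<le> 2 * real m"
      using that norm_triangle_ineq4 [of "f i (y0 + scaleR t y)" "f i y0"]
      unfolding A_def by fastforce
    moreover have "f i (y0 + scaleR t y) - f i y0 = scaleR t (f i y)"
      using linear [OF that] by (simp add: linear_simps)
    ultimately have "t * norm (f i y) \<le> 2 * real m"
      using \<open>t > 0\<close> by simp
    then show ?thesis
      using \<open>t > 0\<close> False by (simp add: t_def field_simps)
  qed
  moreover have "4 * real m / r \<ge> 0" using \<open>r > 0\<close> by simp
  ultimately show ?thesis using that by blast
qed

locale hilbert_cstar_module =
  fixes act :: "'e::{cplx_normed_vector,banach} \<Rightarrow> 'a::cstar_algebra \<Rightarrow> 'e"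
    and inn :: "'e \<Rightarrow> 'e \<Rightarrow> 'a"
  assumes hilbert_module: "hilbert_module act inn"
begin

lemma act_add_right: "act x (a + b) = act x a + act x b"
  using hilbert_module unfolding hilbert_module_def by metis

lemma act_scaleC_right: "act x (scaleC c a) = scaleC c (act x a)"
  using hilbert_module unfolding hilbert_module_def by metis

lemma inn_add_right: "inn x (y + z) = inn x y + inn x z"
  using hilbert_module unfolding hilbert_module_def by metis

lemma inn_scaleC_right: "inn x (scaleC c y) = scaleC c (inn x y)"
  using hilbert_module unfolding hilbert_module_def by metis

lemma inn_act_right: "inn x (act y a) = inn x y * a"
  using hilbert_module unfolding hilbert_module_def by metis

lemma inn_commute: "inn y x = cstar (inn x y)"
  using hilbert_module unfolding hilbert_module_def by metis

lemma inn_self_eq_0: "inn x x = 0 \<longleftrightarrow> x = 0"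
  using hilbert_module unfolding hilbert_module_def by metis

lemma norm_eq_sqrt_inn: "norm x = sqrt (norm (inn x x))"
  using hilbert_module unfolding hilbert_module_def by metis

lemma norm_inn_self: "norm (inn x x) = (norm x)\<^sup>2"
  by (simp add: norm_eq_sqrt_inn)

lemma inn_diff_right: "inn x (y - z) = inn x y - inn x z"
  using inn_add_right [of x "y - z" z] by (simp add: algebra_simps)

lemma inn_add_left: "inn (x + y) z = inn x z + inn y z"
  by (metis inn_commute inn_add_right cstar_add)

lemma inn_diff_left: "inn (x - y) z = inn x z - inn y z"
  by (metis inn_commute inn_diff_right cstar_diff)

lemma inn_scaleC_left: "inn (scaleC c x) y = scaleC (cnj c) (inn x y)"
  by (metis inn_commute inn_scaleC_right cstar_scaleC)

lemma inn_scaleR_right: "inn x (scaleR r y) = scaleR r (inn x y)"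
  by (simp add: scaleR_scaleC inn_scaleC_right)

lemma inn_scaleR_left: "inn (scaleR r x) y = scaleR r (inn x y)"
  by (simp add: scaleR_scaleC inn_scaleC_left)

lemma inn_ext: "(\<And>v. inn x v = inn y v) \<Longrightarrow> x = y"
  by (metis inn_diff_left inn_self_eq_0 right_minus_eq)

lemma inn_self_add_scaleC:
  "inn (x + scaleC c y) (x + scaleC c y) =
     inn x x + scaleC c (inn x y) + scaleC (cnj c) (inn y x) + scaleC (c * cnj c) (inn y y)"
  by (simp add: inn_add_left inn_add_right inn_scaleC_left inn_scaleC_right scaleC_add_right scaleC_scaleC)

lemma inn_polarization:
  fixes x y :: 'e
  defines "P \<equiv> \<lambda>c. inn (x + scaleC c y) (x + scaleC c y)"
  shows "scaleR 4 (inn x y) = (P 1 - P (- 1)) + scaleC (- \<i>) (P \<i> - P (- \<i>))"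
proof -
  have P_odd: "P c - P (- c) = (scaleC c (inn x y) + scaleC (cnj c) (inn y x))
      + (scaleC c (inn x y) + scaleC (cnj c) (inn y x))" for c
    unfolding P_def inn_self_add_scaleC by (simp add: scaleC_minus_left)
  have "scaleR 4 (inn x y) = inn x y + inn x y + inn x y + inn x y"
    using scaleR_add_left [of 2 2 "inn x y"] by (simp add: scaleR_2)
  then show ?thesis
    unfolding P_odd
    by (simp add: scaleC_add_right scaleC_diff_right scaleC_scaleC scaleC_minus_left scaleC_one)
qed

text \<open>Polarization gives the Cauchy--Schwarz inequality up to the factor 4, which is all the
  continuity arguments below need.\<close>

lemma norm_inn_le_square_sum: "norm (inn x y) \<le> (norm x + norm y)\<^sup>2"
proof -
  let ?P = "\<lambda>c. inn (x + scaleC c y) (x + scaleC c y)"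
  have P_le: "norm (?P c) \<le> (norm x + norm y)\<^sup>2" if "cmod c = 1" for c
  proof -
    have "norm (x + scaleC c y) \<le> norm x + norm y"
      using norm_triangle_ineq [of x "scaleC c y"] by (simp add: norm_scaleC that)
    then show ?thesis by (simp add: norm_inn_self power_mono)
  qed
  have "4 * norm (inn x y) = norm ((?P 1 - ?P (- 1)) + scaleC (- \<i>) (?P \<i> - ?P (- \<i>)))"
    using inn_polarization [of x y] by (metis norm_scaleR abs_numeral)
  also have "\<dots> \<le> norm (?P 1) + norm (?P (- 1)) + (norm (?P \<i>) + norm (?P (- \<i>)))"
    by (intro norm_triangle_le add_mono norm_triangle_ineq4) (simp add: norm_scaleC norm_triangle_ineq4)
  also have "\<dots> \<le> 4 * (norm x + norm y)\<^sup>2"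
    using P_le [of 1] P_le [of "- 1"] P_le [of \<i>] P_le [of "- \<i>"] by simp
  finally show ?thesis by simp
qed

lemma norm_inn_le: "norm (inn x y) \<le> 4 * norm x * norm y"
proof (cases "x = 0 \<or> y = 0")
  case True
  then show ?thesis
    using inn_scaleR_left [of 0 x y] inn_scaleR_right [of x 0 y] by auto
next
  case False
  then have "norm x \<noteq> 0" "norm y \<noteq> 0" by simp_all
  define x' where "x' = scaleR (inverse (norm x)) x"
  define y' where "y' = scaleR (inverse (norm y)) y"
  have "inn x y = scaleR (norm x * norm y) (inn x' y')"
    using \<open>norm x \<noteq> 0\<close> \<open>norm y \<noteq> 0\<close>
    by (simp add: x'_def y'_def inn_scaleR_left inn_scaleR_right field_simps)
  moreover have "norm (inn x' y') \<le> 4"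
    using norm_inn_le_square_sum [of x' y'] False by (simp add: x'_def y'_def)
  ultimately show ?thesis
    by (simp add: mult_left_mono mult.commute mult.left_commute)
qed

lemma norm_act_le: "norm (act x a) \<le> 4 * norm x * norm a"
proof -
  have "(norm (act x a))\<^sup>2 = norm (inn (act x a) x * a)"
    by (simp add: norm_inn_self [symmetric] inn_act_right)
  also have "\<dots> \<le> 4 * norm (act x a) * norm x * norm a"
    using norm_mult_ineq [of "inn (act x a) x" a] norm_inn_le [of "act x a" x]
    by (meson mult_right_mono norm_ge_zero order_trans)
  finally show ?thesis
    by (cases "act x a = 0") (simp_all add: power2_eq_square mult.assoc)
qed

lemma bounded_linear_act: "bounded_linear (act x)"
proof (rule bounded_linear_intro [where K = "4 * norm x"])
  show "act x (scaleR r a) = scaleR r (act x a)" for r a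
    by (simp add: scaleR_scaleC act_scaleC_right)
  show "norm (act x a) \<le> norm a * (4 * norm x)" for a
    using norm_act_le [of x a] by (simp add: mult_ac)
qed (simp add: act_add_right)

lemma bounded_linear_inn: "bounded_linear (inn x)"
proof (rule bounded_linear_intro [where K = "4 * norm x"])
  show "norm (inn x y) \<le> norm y * (4 * norm x)" for y
    using norm_inn_le [of x y] by (simp add: mult_ac)
qed (simp_all add: inn_add_right inn_scaleR_right)

text \<open>The definition of \<^const>\<open>compact_op\<close> only controls \<^const>\<open>onorm\<close> \<open>(C - F)\<close>, which carries no
  information unless \<open>C\<close> is already known to be bounded; boundedness comes from adjointability.\<close>

lemma adjointable_imp_bounded_linear:
  assumes "adjointable inn T"
  shows "bounded_linear T"
proof -
  obtain S where adj: "\<And>x y. inn (T x) y = inn x (S y)"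
    using assms unfolding adjointable_def by blast
  have add: "T (x + y) = T x + T y" for x y
    by (rule inn_ext) (simp add: adj inn_add_left)
  have scale: "T (scaleR r x) = scaleR r (T x)" for r x
    by (rule inn_ext) (simp add: adj inn_scaleR_left)
  have "\<exists>B. \<forall>x\<in>{x. norm x \<le> 1}. norm (inn (T x) y) \<le> B" for y
  proof (intro exI ballI)
    fix x :: 'e
    assume "x \<in> {x. norm x \<le> 1}"
    then show "norm (inn (T x) y) \<le> 4 * norm (S y)"
      using norm_inn_le [of x "S y"] mult_right_mono [of "norm x" 1 "4 * norm (S y)"]
      by (simp add: adj mult_ac)
  qed
  then obtain M where "M \<ge> 0" and M: "\<And>x y. norm x \<le> 1 \<Longrightarrow> norm (inn (T x) y) \<le> M * norm y"
    using uniform_boundedness [of "{x. norm x \<le> 1}" "\<lambda>x. inn (T x)"] bounded_linear_inn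
    by (metis mem_Collect_eq)
  have unit: "norm (T x) \<le> M" if "norm x \<le> 1" for x
    using M [OF that, of "T x"] \<open>M \<ge> 0\<close> by (cases "T x = 0") (auto simp: norm_inn_self power2_eq_square)
  have "norm (T x) \<le> norm x * M" for x
  proof (cases "x = 0")
    case True
    then show ?thesis using scale [of 0 0] by simp
  next
    case False
    then have "norm (T (scaleR (inverse (norm x)) x)) \<le> M"
      by (intro unit) simp
    then show ?thesis
      using False by (simp add: scale field_simps)
  qed
  then show ?thesis
    using add scale by (rule bounded_linear_intro [rotated 2])
qed

lemma finite_rank_opE:
  assumes "F \<in> finite_rank_ops act inn"
  obtains n c xs ys where "F = (\<lambda>z. \<Sum>i<(n::nat). scaleC (c i) (act (xs i) (inn (ys i) z)))"
  using assms unfolding finite_rank_ops_def theta_def by blast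

lemma bounded_linear_finite_rank_op:
  assumes "F \<in> finite_rank_ops act inn"
  shows "bounded_linear F"
proof -
  obtain n c xs ys where "F = (\<lambda>z. \<Sum>i<(n::nat). scaleC (c i) (act (xs i) (inn (ys i) z)))"
    using assms by (rule finite_rank_opE)
  then show ?thesis
    by (simp add: bounded_linear_sum bounded_linear_compose [OF bounded_linear_scaleC]
        bounded_linear_compose [OF bounded_linear_act] bounded_linear_inn)
qed

lemma finite_rank_op_tendsto:
  assumes "F \<in> finite_rank_ops act inn"
    and weak: "\<And>v. (\<lambda>k. inn v (w k)) \<longlonglongrightarrow> inn v w0"
  shows "(\<lambda>k. F (w k)) \<longlonglongrightarrow> F w0"
proof -
  obtain n c xs ys where "F = (\<lambda>z. \<Sum>i<(n::nat). scaleC (c i) (act (xs i) (inn (ys i) z)))"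
    using assms(1) by (rule finite_rank_opE)
  then show ?thesis
    by (simp add: tendsto_sum bounded_linear.tendsto [OF bounded_linear_scaleC]
        bounded_linear.tendsto [OF bounded_linear_act] weak)
qed

lemma compact_op_tendsto:
  assumes compact: "compact_op act inn C"
    and "bounded (range w)"
    and weak: "\<And>v. (\<lambda>k. inn v (w k)) \<longlonglongrightarrow> inn v w0"
  shows "(\<lambda>k. C (w k)) \<longlonglongrightarrow> C w0"
proof (rule LIMSEQ_I)
  fix e :: real
  assume "e > 0"
  obtain B where "B > 0" and B: "\<And>z. z \<in> insert w0 (range w) \<Longrightarrow> norm z \<le> B"
    using \<open>bounded (range w)\<close> by (meson bounded_insert bounded_pos)
  have "e / (3 * B) > 0"
    using \<open>e > 0\<close> \<open>B > 0\<close> by simp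
  then obtain F where F: "F \<in> finite_rank_ops act inn" and "onorm (\<lambda>z. C z - F z) < e / (3 * B)"
    using compact unfolding compact_op_def by blast
  have "bounded_linear (\<lambda>z. C z - F z)"
    using compact F unfolding compact_op_def
    by (intro bounded_linear_sub adjointable_imp_bounded_linear bounded_linear_finite_rank_op) auto
  then have approx: "norm (C z - F z) \<le> e / 3" if "z \<in> insert w0 (range w)" for z
  proof -
    have "norm (C z - F z) \<le> onorm (\<lambda>z. C z - F z) * norm z"
      by (rule onorm) fact
    also have "\<dots> \<le> e / (3 * B) * B"
      using \<open>onorm (\<lambda>z. C z - F z) < e / (3 * B)\<close> \<open>e / (3 * B) > 0\<close> B [OF that]
      by (intro mult_mono) (auto simp: onorm_pos_le \<open>bounded_linear (\<lambda>z. C z - F z)\<close>)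
    finally show ?thesis using \<open>B > 0\<close> by simp
  qed
  obtain N where N: "\<And>k. k \<ge> N \<Longrightarrow> norm (F (w k) - F w0) < e / 3"
    using LIMSEQ_D [OF finite_rank_op_tendsto [OF F weak]] \<open>e > 0\<close>
    by (metis divide_pos_pos zero_less_numeral)
  have "norm (C (w k) - C w0) < e" if "k \<ge> N" for k
  proof -
    have "C (w k) - C w0 = (C (w k) - F (w k)) + (F (w k) - F w0) - (C w0 - F w0)"
      by simp
    then have "norm (C (w k) - C w0)
        \<le> norm (C (w k) - F (w k)) + norm (F (w k) - F w0) + norm (C w0 - F w0)"
      by (metis norm_triangle_ineq norm_triangle_ineq4 add_right_mono order_trans)
    then show ?thesis
      using approx [of "w k"] approx [of w0] N [OF that] by simp
  qed
  then show "\<exists>N. \<forall>k\<ge>N. norm (C (w k) - C w0) < e" by blast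
qed

end

locale compact_perturbation = hilbert_cstar_module act inn
  for act :: "'e::{cplx_normed_vector,banach} \<Rightarrow> 'a::cstar_algebra \<Rightarrow> 'e" and inn +
  fixes C :: "'e \<Rightarrow> 'e"
  assumes compact_op: "compact_op act inn C"
    and property_H: "property_H inn"
begin

lemma bounded_linear_C: "bounded_linear C"
  using compact_op unfolding compact_op_def by (blast intro: adjointable_imp_bounded_linear)

sublocale C: bounded_linear C
  by (rule bounded_linear_C)

lemma compact_op_subseq_tendsto:
  fixes w :: "nat \<Rightarrow> 'e"
  assumes "bounded (range w)"
  obtains r w0 where "strict_mono r" and "(\<lambda>k. C (w (r k))) \<longlonglongrightarrow> C w0"
proof -
  obtain r w0 where "strict_mono r" and weak: "\<And>v. (\<lambda>k. inn v (w (r k))) \<longlonglongrightarrow> inn v w0"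
    using property_H assms unfolding property_H_def by blast
  moreover have "bounded (range (\<lambda>k. w (r k)))"
    using assms by (rule bounded_subset) auto
  ultimately show ?thesis
    using compact_op_tendsto [OF compact_op] that by blast
qed

lemma subseq_tendsto_if_I_minus_C_tendsto:
  fixes w :: "nat \<Rightarrow> 'e"
  assumes "bounded (range w)" and L_lim: "(\<lambda>n. w n - C (w n)) \<longlonglongrightarrow> l"
  obtains r u where "strict_mono r" and "(\<lambda>k. w (r k)) \<longlonglongrightarrow> u" and "u - C u = l"
proof -
  obtain r w0 where r: "strict_mono r" and C_lim: "(\<lambda>k. C (w (r k))) \<longlonglongrightarrow> C w0"
    using assms(1) by (rule compact_op_subseq_tendsto)
  have "(\<lambda>k. (w (r k) - C (w (r k))) + C (w (r k))) \<longlonglongrightarrow> l + C w0"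
    using LIMSEQ_subseq_LIMSEQ [OF L_lim r] C_lim by (intro tendsto_add) (simp_all add: o_def)
  then have w_lim: "(\<lambda>k. w (r k)) \<longlonglongrightarrow> l + C w0"
    by simp
  have "C (l + C w0) = C w0"
    using C.tendsto [OF w_lim] C_lim by (rule LIMSEQ_unique)
  then show ?thesis
    using that [OF r w_lim] by simp
qed

text \<open>\<open>Ker (I - C)\<close>, written as the fixed points of \<open>C\<close>: the simplifier turns a hypothesis
  \<open>v - C v = 0\<close> into the looping rewrite rule \<open>v = C v\<close>, whereas \<open>C v = v\<close> terminates.\<close>

definition ker_L :: "'e set" where
  "ker_L = {v. C v = v}"

lemma zero_in_ker_L: "0 \<in> ker_L"
  by (simp add: ker_L_def C.zero)

lemma ker_L_add: "u \<in> ker_L \<Longrightarrow> v \<in> ker_L \<Longrightarrow> u + v \<in> ker_L"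
  by (simp add: ker_L_def C.add)

lemma ker_L_scaleR: "v \<in> ker_L \<Longrightarrow> scaleR t v \<in> ker_L"
  by (simp add: ker_L_def C.scaleR)

lemma infdist_ker_L_attained: "\<exists>u\<in>ker_L. norm (x - u) = infdist x ker_L"
proof -
  let ?d = "infdist x ker_L"
  have "ker_L \<noteq> {}"
    using zero_in_ker_L by blast
  then have "(INF v\<in>ker_L. dist x v) < ?d + inverse (Suc k)" for k :: nat
    by (simp add: infdist_notempty)
  then have "\<forall>k::nat. \<exists>v. v \<in> ker_L \<and> dist x v < ?d + inverse (Suc k)"
    by (simp only: cINF_less_iff [OF \<open>ker_L \<noteq> {}\<close> bdd_below_image_dist] Bex_def simp_thms)
  from choice [OF this] obtain v
    where v: "\<And>k. v k \<in> ker_L" and v_lt: "\<And>k. dist x (v k) < ?d + inverse (Suc k)"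
    by blast
  have dist_lim: "(\<lambda>k. dist x (v k)) \<longlonglongrightarrow> ?d"
  proof (rule tendsto_sandwich [of "\<lambda>_. ?d" _ _ "\<lambda>k. ?d + inverse (Suc k)"])
    show "(\<lambda>k. ?d + inverse (Suc k)) \<longlonglongrightarrow> ?d"
      using tendsto_add [OF tendsto_const LIMSEQ_inverse_real_of_nat, of ?d] by simp
    show "\<forall>\<^sub>F k in sequentially. dist x (v k) \<le> ?d + inverse (Suc k)"
      by (intro always_eventually allI less_imp_le v_lt)
  qed (simp_all add: infdist_le v)
  have "dist x (v k) \<le> ?d + 1" for k
    using v_lt [of k] inverse_le_1_iff [of "real (Suc k)"] by linarith
  then have "range v \<subseteq> cball x (?d + 1)"
    by auto
  then have "bounded (range v)"
    by (rule bounded_subset [OF bounded_cball])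
  moreover have "(\<lambda>k. v k - C (v k)) \<longlonglongrightarrow> 0"
    using v by (simp add: ker_L_def)
  ultimately obtain r u where r: "strict_mono r" and "(\<lambda>k. v (r k)) \<longlonglongrightarrow> u" and "u \<in> ker_L"
    by (rule subseq_tendsto_if_I_minus_C_tendsto) (simp add: ker_L_def)
  then have "(\<lambda>k. dist x (v (r k))) \<longlonglongrightarrow> dist x u"
    by (intro tendsto_intros)
  moreover have "(\<lambda>k. dist x (v (r k))) \<longlonglongrightarrow> ?d"
    using LIMSEQ_subseq_LIMSEQ [OF dist_lim r] by (simp add: o_def)
  ultimately have "dist x u = ?d"
    by (rule LIMSEQ_unique)
  then show ?thesis
    using \<open>u \<in> ker_L\<close> unfolding dist_norm by blast
qed

lemma norm_normalized_diff_ker_L_ge_1: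
  assumes minimal: "\<And>v. v \<in> ker_L \<Longrightarrow> norm z \<le> norm (z - v)"
    and "z \<noteq> 0" and "v \<in> ker_L"
  shows "1 \<le> norm (scaleR (inverse (norm z)) z - v)"
proof -
  have "norm z \<le> norm (z - scaleR (norm z) v)"
    using minimal ker_L_scaleR [OF \<open>v \<in> ker_L\<close>] by blast
  also have "z - scaleR (norm z) v = scaleR (norm z) (scaleR (inverse (norm z)) z - v)"
    using \<open>z \<noteq> 0\<close> by (simp add: scaleR_diff_right)
  finally show ?thesis
    using \<open>z \<noteq> 0\<close> by simp
qed

lemma I_minus_C_normalized_tendsto_0:
  fixes y :: "nat \<Rightarrow> 'e"
  assumes B: "\<And>k. norm (y k - C (y k)) \<le> B"
    and large: "\<And>k. real (Suc k) < norm (y k)"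
  defines "w \<equiv> \<lambda>k. scaleR (inverse (norm (y k))) (y k)"
  shows "(\<lambda>k. w k - C (w k)) \<longlonglongrightarrow> 0"
proof (rule Lim_null_comparison)
  have "B \<ge> 0"
    by (rule order_trans [OF norm_ge_zero B])
  show "\<forall>\<^sub>F k in sequentially. norm (w k - C (w k)) \<le> B * inverse (Suc k)"
  proof (intro always_eventually allI)
    fix k
    have "norm (y k) > 0"
      by (rule le_less_trans [OF _ large]) simp
    have "w k - C (w k) = scaleR (inverse (norm (y k))) (y k - C (y k))"
      by (simp add: w_def C.scaleR scaleR_diff_right)
    then have "norm (w k - C (w k)) = norm (y k - C (y k)) / norm (y k)"
      by (simp add: divide_inverse_commute)
    also have "\<dots> \<le> B / real (Suc k)"
      using B [of k] large [of k] \<open>B \<ge> 0\<close> by (intro frac_le) auto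
    finally show "norm (w k - C (w k)) \<le> B * inverse (Suc k)"
      by (simp add: divide_inverse)
  qed
  show "(\<lambda>k. B * inverse (Suc k)) \<longlonglongrightarrow> 0"
    using tendsto_mult_right_zero [OF LIMSEQ_inverse_real_of_nat] by simp
qed

lemma bounded_best_approximations:
  fixes x u :: "nat \<Rightarrow> 'e"
  assumes u: "\<And>n. u n \<in> ker_L"
    and L_conv: "convergent (\<lambda>n. x n - C (x n))"
    and best: "\<And>n. norm (x n - u n) = infdist (x n) ker_L"
  shows "bounded (range (\<lambda>n. x n - u n))"
proof (rule ccontr)
  define z where "z n = x n - u n" for n
  have minimal: "norm (z n) \<le> norm (z n - v)" if "v \<in> ker_L" for n v
  proof -
    have "norm (z n) = infdist (x n) ker_L"
      by (simp add: z_def best)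
    also have "\<dots> \<le> dist (x n) (u n + v)"
      by (intro infdist_le ker_L_add u that)
    also have "\<dots> = norm (z n - v)"
      by (simp add: z_def dist_norm algebra_simps)
    finally show ?thesis .
  qed
  have "z n - C (z n) = x n - C (x n)" for n
    using u [of n] by (simp add: z_def ker_L_def C.diff)
  then have "Bseq (\<lambda>n. z n - C (z n))"
    using convergent_imp_Bseq [OF L_conv] by simp
  then obtain B where B: "\<And>n. norm (z n - C (z n)) \<le> B"
    by (rule BseqE) blast
  assume "\<not> bounded (range (\<lambda>n. x n - u n))"
  then have "\<forall>k::nat. \<exists>n. real (Suc k) < norm (z n)"
    by (auto simp: bounded_iff z_def not_le)
  from choice [OF this] obtain m where m: "\<And>k. real (Suc k) < norm (z (m k))"
    by blast
  have z_pos: "norm (z (m k)) > 0" for k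
    by (rule le_less_trans [OF _ m]) simp
  define w where "w k = scaleR (inverse (norm (z (m k)))) (z (m k))" for k
  have "norm (w k) = 1" for k
    using z_pos [of k] by (simp add: w_def)
  then have "bounded (range w)"
    unfolding bounded_iff by auto
  moreover have "(\<lambda>k. w k - C (w k)) \<longlonglongrightarrow> 0"
    unfolding w_def using B m by (rule I_minus_C_normalized_tendsto_0)
  ultimately obtain r v where "(\<lambda>k. w (r k)) \<longlonglongrightarrow> v" and "v \<in> ker_L"
    by (rule subseq_tendsto_if_I_minus_C_tendsto) (simp add: ker_L_def)
  moreover have far: "1 \<le> norm (w k - v)" for k
    unfolding w_def using minimal z_pos [of k] \<open>v \<in> ker_L\<close>
    by (intro norm_normalized_diff_ker_L_ge_1) auto
  ultimately obtain N where "norm (w (r N) - v) < 1"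
    using LIMSEQ_D [of "\<lambda>k. w (r k)" v 1] by auto
  with far show False
    by (meson not_less)
qed

lemma best_approximation_sequences:
  assumes "y \<in> closure (range (\<lambda>x. x - C x))"
  obtains x u where "\<And>n. u n \<in> ker_L" and "(\<lambda>n. x n - C (x n)) \<longlonglongrightarrow> y"
    and "\<And>n. norm (x n - u n) = infdist (x n) ker_L"
proof -
  obtain z where z: "\<And>n. z n \<in> range (\<lambda>x. x - C x)" and "z \<longlonglongrightarrow> y"
    using assms unfolding closure_sequential by blast
  have "\<forall>n. \<exists>x. z n = x - C x"
    using z by blast
  from choice [OF this] obtain x where "\<forall>n. z n = x n - C (x n)"
    by blast
  then have "z = (\<lambda>n. x n - C (x n))"
    by blast
  with \<open>z \<longlonglongrightarrow> y\<close> have "(\<lambda>n. x n - C (x n)) \<longlonglongrightarrow> y"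
    by simp
  moreover have "\<forall>n. \<exists>u. u \<in> ker_L \<and> norm (x n - u) = infdist (x n) ker_L"
    using infdist_ker_L_attained by blast
  from choice [OF this] obtain u where "\<forall>n. u n \<in> ker_L \<and> norm (x n - u n) = infdist (x n) ker_L"
    by blast
  ultimately show ?thesis
    by (intro that [where x = x and u = u]) auto
qed

end

theorem lemma2p4:
  fixes act :: "'e::{cplx_normed_vector,banach} \<Rightarrow> 'a::cstar_algebra \<Rightarrow> 'e"
    and inn :: "'e \<Rightarrow> 'e \<Rightarrow> 'a"
    and C :: "'e \<Rightarrow> 'e"
  assumes "hilbert_module act inn"
    and "property_H inn"
    and "compact_op act inn C"
  shows "(\<forall>y\<in>closure (range (\<lambda>x. x - C x)).
            \<exists>x u. (\<forall>n. u n \<in> {v. v - C v = 0}) \<and>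
                  (\<lambda>n. x n - C (x n)) \<longlonglongrightarrow> y \<and>
                  (\<forall>n. norm (x n - u n) = (INF v\<in>{v. v - C v = 0}. norm (x n - v))))
       \<and> (\<forall>(x::nat \<Rightarrow> 'e) u y. y \<in> closure (range (\<lambda>x. x - C x)) \<and>
            (\<forall>n. u n \<in> {v. v - C v = 0}) \<and>
            (\<lambda>n. x n - C (x n)) \<longlonglongrightarrow> y \<and>
            (\<forall>n. norm (x n - u n) = (INF v\<in>{v. v - C v = 0}. norm (x n - v)))
            \<longrightarrow> bounded (range (\<lambda>n. x n - u n)))"
proof -
  interpret compact_perturbation act inn C
    using assms by (simp add: compact_perturbation_def compact_perturbation_axioms_def
        hilbert_cstar_module_def)
  have ker_L_eq: "{v. v - C v = 0} = ker_L"
    unfolding ker_L_def by (intro Collect_cong) (metis right_minus_eq)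
  have INF_eq_infdist: "(INF v\<in>ker_L. norm (z - v)) = infdist z ker_L" for z
    using zero_in_ker_L by (auto simp: infdist_def dist_norm)
  show ?thesis
    unfolding ker_L_eq INF_eq_infdist
  proof (intro conjI ballI allI impI)
    fix y
    assume "y \<in> closure (range (\<lambda>x. x - C x))"
    then show "\<exists>x u. (\<forall>n. u n \<in> ker_L) \<and> (\<lambda>n. x n - C (x n)) \<longlonglongrightarrow> y
        \<and> (\<forall>n. norm (x n - u n) = infdist (x n) ker_L)"
      by (rule best_approximation_sequences) blast
  qed (use bounded_best_approximations convergent_def in blast)
qed

end
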